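(* Let $\tau\colon A\to A^*$ be a substitution prolongable on $a\in A$ and $\mathbf{x}=\tau^\omega(a)$. Assume $\tau_2$ is ultimately Pisot with characteristic polynomial $X^mP_\theta(X)$ for some Pisot number $\theta$ and some integer $m\ge0$. Then the characteristic polynomial of the incidence matrix of $\tau$ is $X^\ell P_\theta(X)$ for some $\ell\le m$. In particular, $\tau$ is ultimately Pisot with the same Pisot root $\theta$.
   Context: The incidence matrix of a substitution $\sigma$ over $\{a_1,\dots,a_d\}$ has $(i,j)$ entry $|\sigma(a_i)|_{a_j}$; characteristic polynomial of a substitution means that of its incidence matrix. A Pisot number is an algebraic integer $\theta>1$ whose other conjugates have modulus $<1$, with minimal polynomial $P_\theta$; a substitution is ultimately Pisot if its characteristic polynomial is $X^mP_\theta(X)$ for some $m\ge0$ and Pisot number $\theta$. The substitution $\tau_2$: let $A_2=\{1,\dots,p\}$, $p$ the number of length-$2$ factors of $\mathbf{x}$, and $\Theta_2$ the bijection numbering length-$2$ factors of $\mathbf{x}$ in order of first occurrence; for $\ell\in A_2$ with $u=\Theta_2^{-1}(\ell)$ and $m'=|\tau(u[0])|$, $\tau_2(\ell)=\Theta_2(w_0)\cdots\Theta_2(w_{m'-1})$ where $w_j$ is the length-$2$ factor of $\tau(u)$ starting at position $j$. *)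

theory Defs
  imports Complex_Main "Jordan_Normal_Form.Char_Poly"
begin

definition is_substitution :: "nat \<Rightarrow> (nat \<Rightarrow> nat list) \<Rightarrow> bool" where
  "is_substitution d \<tau> \<longleftrightarrow> (\<forall>b<d. \<tau> b \<noteq> [] \<and> set (\<tau> b) \<subseteq> {0..<d})"

definition subst_word :: "(nat \<Rightarrow> nat list) \<Rightarrow> nat list \<Rightarrow> nat list" where
  "subst_word \<tau> w = concat (map \<tau> w)"

definition prolongable :: "nat \<Rightarrow> (nat \<Rightarrow> nat list) \<Rightarrow> nat \<Rightarrow> bool" where
  "prolongable d \<tau> a \<longleftrightarrow> a < d \<and> (\<exists>u. u \<noteq> [] \<and> \<tau> a = a # u)"

text \<open>The infinite fixed point tau^omega(a), as a function nat => letter: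
  the n-th letter is read off the first iterate tau^k(a) that is long enough.\<close>
definition fixpoint_word :: "(nat \<Rightarrow> nat list) \<Rightarrow> nat \<Rightarrow> nat \<Rightarrow> nat" where
  "fixpoint_word \<tau> a n =
     (let k = (LEAST k. n < length ((subst_word \<tau> ^^ k) [a])) in ((subst_word \<tau> ^^ k) [a]) ! n)"

definition incidence_matrix :: "nat \<Rightarrow> (nat \<Rightarrow> nat list) \<Rightarrow> int mat" where
  "incidence_matrix d \<tau> = mat d d (\<lambda>(i,j). int (count_list (\<tau> i) j))"

definition factors2 :: "(nat \<Rightarrow> nat) \<Rightarrow> nat list set" where
  "factors2 x = {[x i, x (Suc i)] | i. True}"

definition first_occ :: "(nat \<Rightarrow> nat) \<Rightarrow> nat list \<Rightarrow> nat" where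
  "first_occ x w = (LEAST i. [x i, x (Suc i)] = w)"

text \<open>Theta_2: numbering of length-2 factors in order of first occurrence
  (numbered 0, ..., p-1 instead of 1, ..., p).\<close>
definition Theta2 :: "(nat \<Rightarrow> nat) \<Rightarrow> nat list \<Rightarrow> nat" where
  "Theta2 x w = card {v \<in> factors2 x. first_occ x v < first_occ x w}"

definition tau2 :: "(nat \<Rightarrow> nat list) \<Rightarrow> nat \<Rightarrow> nat \<Rightarrow> nat list" where
  "tau2 \<tau> a l =
     (let x = fixpoint_word \<tau> a;
          u = (THE u. u \<in> factors2 x \<and> Theta2 x u = l);
          m' = length (\<tau> (u ! 0))
      in map (\<lambda>j. Theta2 x (take 2 (drop j (subst_word \<tau> u)))) [0..<m'])"

text \<open>P is the minimal polynomial of the Pisot number theta: P is monic,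
  irreducible in Z[X] (equivalently in Q[X], by Gauss' lemma, as P is monic),
  has theta as a root; theta > 1 and every other complex root of P has modulus < 1.\<close>
definition pisot_minpoly :: "real \<Rightarrow> int poly \<Rightarrow> bool" where
  "pisot_minpoly \<theta> P \<longleftrightarrow>
     \<theta> > 1 \<and> lead_coeff P = 1 \<and> irreducible P \<and>
     poly (of_int_poly P) (complex_of_real \<theta>) = 0 \<and>
     (\<forall>z. poly (of_int_poly P) z = 0 \<and> z \<noteq> complex_of_real \<theta> \<longrightarrow> cmod z < 1)"

end

(*
  Let f send a length-2 factor of x to its first letter and let Phi be the 0/1 matrix of f.
  For a factor u = u0 u1, tau2 lists the length-2 factors of x that start inside the block
  tau(u0) of tau(u), so mapping f over tau2(u) gives back tau(u0); in matrix form
  M2 Phi = Phi M for the incidence matrices M2 of tau2 and M of tau.  Since every letter occurs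
  in x, f is onto, hence the columns of Phi span an M2-invariant subspace on which M2 acts as M,
  and char_poly M divides char_poly M2 = X^m P.  As P is irreducible, char_poly M is X^l or
  X^l P with l <= m.  The first case is impossible: tau(a) begins with a, so trace M > 0,
  while a matrix with characteristic polynomial X^d is similar over the complex numbers to a
  strictly upper triangular matrix and has trace 0.
*)

theory Submission
  imports Defs "Jordan_Normal_Form.Schur_Decomposition"
begin

section \<open>Characteristic polynomials and invariant subspaces\<close>

lemma mat_mult_left_right_inverse_comm_ring:
  fixes A B :: "'a :: comm_ring_1 mat"
  assumes A: "A \<in> carrier_mat n n" and B: "B \<in> carrier_mat n n" and AB: "A * B = 1\<^sub>m n"
  shows "B * A = 1\<^sub>m n"
proof -
  \<comment> \<open>The library version needs a field; here \<open>det A\<close> is a unit and the adjugate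
    of \<open>A\<close> equals \<open>det A \<cdot> B\<close>.\<close>
  have "det A * det B = 1" using det_mult[OF A B] AB by simp
  have adj: "adj_mat A = det A \<cdot>\<^sub>m B"
  proof -
    have "adj_mat A = adj_mat A * (A * B)" using adj_mat(1)[OF A] by (simp add: AB)
    also have "\<dots> = (adj_mat A * A) * B" using adj_mat(1)[OF A] A B by simp
    also have "\<dots> = det A \<cdot>\<^sub>m B"
      using adj_mat(3)[OF A] mult_smult_assoc_mat[of "1\<^sub>m n" n n B] B by simp
    finally show ?thesis .
  qed
  have scaled: "det A \<cdot>\<^sub>m (B * A) = det A \<cdot>\<^sub>m 1\<^sub>m n"
    using adj_mat(3)[OF A] adj A B by (simp add: mult_smult_assoc_mat)
  show ?thesis
  proof (rule eq_matI)
    fix i j assume "i < dim_row (1\<^sub>m n :: 'a mat)" "j < dim_col (1\<^sub>m n :: 'a mat)"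
    then have "det A * (B * A) $$ (i, j) = det A * 1\<^sub>m n $$ (i, j)"
      using arg_cong[OF scaled, of "\<lambda>M. M $$ (i, j)"] A B by simp
    then have "(det B * det A) * (B * A) $$ (i, j) = (det B * det A) * 1\<^sub>m n $$ (i, j)"
      by (simp add: mult.assoc)
    then show "(B * A) $$ (i, j) = 1\<^sub>m n $$ (i, j)"
      using \<open>det A * det B = 1\<close> by (simp add: mult.commute)
  qed (use A B in auto)
qed

lemma char_poly_four_block_zero_lower_left:
  fixes A1 :: "'a :: idom mat"
  assumes A1: "A1 \<in> carrier_mat k k" and A2: "A2 \<in> carrier_mat k m"
    and A4: "A4 \<in> carrier_mat m m"
  shows "char_poly (four_block_mat A1 A2 (0\<^sub>m m k) A4) = char_poly A1 * char_poly A4"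
proof -
  let ?cm = "\<lambda> A. [:0, 1:] \<cdot>\<^sub>m 1\<^sub>m (dim_row A) + map_mat (\<lambda>a. [:- a:]) A"
  have "?cm (four_block_mat A1 A2 (0\<^sub>m m k) A4)
        = four_block_mat (?cm A1) (map_mat (\<lambda>a. [:- a:]) A2) (0\<^sub>m m k) (?cm A4)"
    by (rule eq_matI) (use A1 A2 A4 in \<open>auto simp: one_poly_def\<close>)
  moreover have "det \<dots> = det (?cm A1) * det (?cm A4)"
    by (rule det_four_block_mat_lower_left_zero[OF _ _ refl]) (use A1 A2 A4 in auto)
  ultimately show ?thesis unfolding char_poly_defs by simp
qed

definition fun_mat :: "nat \<Rightarrow> nat \<Rightarrow> (nat \<Rightarrow> nat) \<Rightarrow> 'a :: semiring_1 mat" where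
  "fun_mat n k f = mat n k (\<lambda>(i, b). if f i = b then 1 else 0)"

lemma fun_mat_carrier [simp]: "fun_mat n k f \<in> carrier_mat n k"
  and dim_row_fun_mat [simp]: "dim_row (fun_mat n k f) = n"
  and dim_col_fun_mat [simp]: "dim_col (fun_mat n k f) = k"
  by (simp_all add: fun_mat_def)

lemma fun_mat_mult_index:
  assumes "B \<in> carrier_mat k c" "i < n" "j < c" "f i < k"
  shows "(fun_mat n k f * B) $$ (i, j) = B $$ (f i, j)"
proof -
  have "(fun_mat n k f * B) $$ (i, j) = (\<Sum>v<k. (if f i = v then 1 else 0) * B $$ (v, j))"
    using assms by (simp add: fun_mat_def scalar_prod_def atLeast0LessThan)
  also have "\<dots> = (\<Sum>v<k. if v = f i then B $$ (v, j) else 0)"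
    by (rule sum.cong) auto
  also have "\<dots> = B $$ (f i, j)"
    using assms(4) by simp
  finally show ?thesis .
qed

lemma mult_fun_mat_index:
  assumes "A \<in> carrier_mat r n" "i < r" "b < k"
  shows "(A * fun_mat n k f) $$ (i, b) = (\<Sum>v\<in>{v. v < n \<and> f v = b}. A $$ (i, v))"
proof -
  have "(A * fun_mat n k f) $$ (i, b) = (\<Sum>v<n. A $$ (i, v) * (if f v = b then 1 else 0))"
    using assms by (simp add: fun_mat_def scalar_prod_def atLeast0LessThan)
  also have "\<dots> = (\<Sum>v<n. if f v = b then A $$ (i, v) else 0)"
    by (rule sum.cong) auto
  also have "\<dots> = (\<Sum>v\<in>{v \<in> {..<n}. f v = b}. A $$ (i, v))"
    by (rule sum.inter_filter[symmetric]) simp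
  finally show ?thesis by (simp add: lessThan_def)
qed

lemma obtain_bij_section:
  fixes f :: "nat \<Rightarrow> nat"
  assumes onto: "f ` {0..<n} = {0..<k}"
  obtains \<sigma> where "bij_betw \<sigma> {0..<n} {0..<n}" and "\<And>j. j < k \<Longrightarrow> f (\<sigma> j) = j"
proof -
  define r where "r = inv_into {0..<n} f"
  define R where "R = r ` {0..<k}"
  have fr: "f (r j) = j" if "j < k" for j
    unfolding r_def by (rule f_inv_into_f) (use that onto in simp)
  have r: "bij_betw r {0..<k} R"
    unfolding R_def by (rule inj_on_imp_bij_betw, rule inj_on_inverseI[of _ f]) (simp add: fr)
  have R: "R \<subseteq> {0..<n}"
    using onto inv_into_into[of _ f "{0..<n}"] by (force simp: R_def r_def)
  have "k \<le> n"
    using card_image_le[of "{0..<n}" f] onto by simp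
  have "card ({0..<n} - R) = card {k..<n}"
    using R bij_betw_same_card[OF r] by (simp add: card_Diff_subset finite_subset)
  then obtain h where h: "bij_betw h {k..<n} ({0..<n} - R)"
    using finite_same_card_bij[of "{k..<n}" "{0..<n} - R"] by auto
  define \<sigma> where "\<sigma> j = (if j < k then r j else h j)" for j
  have "bij_betw \<sigma> {0..<k} R = bij_betw r {0..<k} R"
    by (rule bij_betw_cong) (simp add: \<sigma>_def)
  moreover have "bij_betw \<sigma> {k..<n} ({0..<n} - R) = bij_betw h {k..<n} ({0..<n} - R)"
    by (rule bij_betw_cong) (simp add: \<sigma>_def)
  ultimately have "bij_betw \<sigma> ({0..<k} \<union> {k..<n}) (R \<union> ({0..<n} - R))"
    using r h by (intro bij_betw_combine) auto
  moreover have "{0..<k} \<union> {k..<n} = {0..<n}" "R \<union> ({0..<n} - R) = {0..<n}"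
    using \<open>k \<le> n\<close> R by auto
  ultimately have "bij_betw \<sigma> {0..<n} {0..<n}" by simp
  moreover have "f (\<sigma> j) = j" if "j < k" for j
    using that fr by (simp add: \<sigma>_def)
  ultimately show ?thesis using that by blast
qed

lemma obtain_fun_mat_basis_completion:
  fixes f \<sigma> :: "nat \<Rightarrow> nat"
  assumes "k \<le> n" and f: "\<And>i. i < n \<Longrightarrow> f i < k"
    and \<sigma>: "bij_betw \<sigma> {0..<n} {0..<n}" and f\<sigma>: "\<And>j. j < k \<Longrightarrow> f (\<sigma> j) = j"
  obtains Q Q' :: "'a :: comm_ring_1 mat"
  where "Q \<in> carrier_mat n n" and "Q' \<in> carrier_mat n n" and "Q' * Q = 1\<^sub>m n"
    and "\<And>j. j < k \<Longrightarrow> col Q j = col (fun_mat n k f) j"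
proof -
  have \<sigma>_lt: "\<sigma> j < n" if "j < n" for j
    using that \<sigma> by (auto simp: bij_betw_def)
  have \<sigma>_eq: "\<sigma> j = \<sigma> j' \<longleftrightarrow> j = j'" if "j < n" "j' < n" for j j'
    using that \<sigma> by (auto simp: bij_betw_def dest: inj_onD)
  define Q :: "'a mat" where "Q = mat n n (\<lambda>(i, j).
    if j < k then (if f i = j then 1 else 0) else (if i = \<sigma> j then 1 else 0))"
  \<comment> \<open>For \<open>k \<le> j\<close>, row \<open>j\<close> of \<open>Q'\<close> also subtracts the coordinate \<open>\<sigma> (f (\<sigma> j))\<close>,
    the chosen representative of the fibre containing \<open>\<sigma> j\<close>, so that it annihilates the
    first \<open>k\<close> columns of \<open>Q\<close>.\<close>
  define Q' :: "'a mat" where "Q' = mat n n (\<lambda>(j, i).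
    (if i = \<sigma> j then 1 else 0) - (if k \<le> j \<and> i = \<sigma> (f (\<sigma> j)) then 1 else 0))"
  have Q: "Q \<in> carrier_mat n n" and Q': "Q' \<in> carrier_mat n n"
    by (simp_all add: Q_def Q'_def)
  have Q'_mult: "(Q' * C) $$ (j, c)
      = C $$ (\<sigma> j, c) - (if k \<le> j then C $$ (\<sigma> (f (\<sigma> j)), c) else 0)"
    if C: "C \<in> carrier_mat n m" and j: "j < n" and c: "c < m" for C m j c
  proof -
    have "(Q' * C) $$ (j, c) = (\<Sum>i<n. (if i = \<sigma> j then C $$ (i, c) else 0)
        - (if k \<le> j \<and> i = \<sigma> (f (\<sigma> j)) then C $$ (i, c) else 0))"
      using C j c by (auto simp: Q'_def scalar_prod_def atLeast0LessThan algebra_simps intro!: sum.cong)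
    also have "\<dots> = C $$ (\<sigma> j, c) - (if k \<le> j then C $$ (\<sigma> (f (\<sigma> j)), c) else 0)"
      using \<sigma>_lt[OF j] \<sigma>_lt[of "f (\<sigma> j)"] f[OF \<sigma>_lt[OF j]] \<open>k \<le> n\<close>
      by (simp add: sum_subtractf)
    finally show ?thesis .
  qed
  have "Q' * Q = 1\<^sub>m n"
  proof (rule eq_matI)
    fix j j' assume "j < dim_row (1\<^sub>m n :: 'a mat)" "j' < dim_col (1\<^sub>m n :: 'a mat)"
    then have j: "j < n" and j': "j' < n" by auto
    have "f (\<sigma> j) < k" using f \<sigma>_lt j by blast
    then show "(Q' * Q) $$ (j, j') = 1\<^sub>m n $$ (j, j')"
      using Q'_mult[OF Q j j'] j j' f\<sigma> \<sigma>_lt \<sigma>_eq[OF j j'] \<sigma>_eq[OF _ j', of "f (\<sigma> j)"] \<open>k \<le> n\<close>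
      by (auto simp: Q_def)
  qed (use Q Q' in auto)
  moreover have "col Q j = col (fun_mat n k f) j" if "j < k" for j
    using that \<open>k \<le> n\<close> by (auto simp: Q_def fun_mat_def)
  ultimately show ?thesis
    using that Q Q' by blast
qed

lemma char_poly_dvd_if_leading_block:
  fixes T :: "'a :: idom mat"
  assumes T: "T \<in> carrier_mat n n" and B: "B \<in> carrier_mat k k" and "k \<le> n"
    and first_cols: "\<And>j b. j < n \<Longrightarrow> b < k \<Longrightarrow> T $$ (j, b) = (if j < k then B $$ (j, b) else 0)"
  shows "char_poly B dvd char_poly T"
proof -
  define T2 where "T2 = mat k (n - k) (\<lambda>(i, j). T $$ (i, j + k))"
  define T4 where "T4 = mat (n - k) (n - k) (\<lambda>(i, j). T $$ (i + k, j + k))"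
  have blocks: "T = four_block_mat B T2 (0\<^sub>m (n - k) k) T4"
    by (rule eq_matI) (use T B first_cols \<open>k \<le> n\<close> in \<open>auto simp: T2_def T4_def\<close>)
  have "char_poly T = char_poly B * char_poly T4"
    by (subst blocks, rule char_poly_four_block_zero_lower_left[OF B]) (simp_all add: T2_def T4_def)
  then show ?thesis by simp
qed

lemma char_poly_dvd_if_fun_mat_intertwines:
  fixes A B :: "'a :: idom mat"
  assumes A: "A \<in> carrier_mat n n" and B: "B \<in> carrier_mat k k"
    and onto: "f ` {0..<n} = {0..<k}"
    and intertwines: "A * fun_mat n k f = fun_mat n k f * B"
  shows "char_poly B dvd char_poly A"
proof -
  \<comment> \<open>The columns of \<open>\<Phi>\<close> span an \<open>A\<close>-invariant subspace on which \<open>A\<close> acts as \<open>B\<close>; in a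
    basis extending them, \<open>A\<close> has leading block \<open>B\<close> with zeros below it.\<close>
  define \<Phi> :: "'a mat" where "\<Phi> = fun_mat n k f"
  have \<Phi>: "\<Phi> \<in> carrier_mat n k"
    by (simp add: \<Phi>_def)
  have "k \<le> n"
    using card_image_le[of "{0..<n}" f] onto by simp
  have f: "f i < k" if "i < n" for i
    using that onto by auto
  obtain \<sigma> where \<sigma>: "bij_betw \<sigma> {0..<n} {0..<n}" and f\<sigma>: "\<And>j. j < k \<Longrightarrow> f (\<sigma> j) = j"
    using obtain_bij_section[OF onto] by blast
  obtain Q Q' :: "'a mat" where Q: "Q \<in> carrier_mat n n" and Q': "Q' \<in> carrier_mat n n"
    and Q'Q: "Q' * Q = 1\<^sub>m n" and col_Q: "\<And>j. j < k \<Longrightarrow> col Q j = col \<Phi> j"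
    using obtain_fun_mat_basis_completion[OF \<open>k \<le> n\<close> f \<sigma> f\<sigma>] unfolding \<Phi>_def by blast
  have "similar_mat (Q' * A * Q) A"
    using A Q Q' Q'Q mat_mult_left_right_inverse_comm_ring[OF Q' Q Q'Q]
    by (intro similar_matI[of _ A Q' Q n]) auto
  then have "char_poly (Q' * A * Q) = char_poly A"
    by (rule char_poly_similar)
  moreover have "(Q' * A * Q) $$ (j, b) = (if j < k then B $$ (j, b) else 0)"
    if "j < n" "b < k" for j b
  proof -
    have "col (A * Q) b = A *\<^sub>v col Q b"
      by (rule col_mult2[OF A Q]) (use that \<open>k \<le> n\<close> in simp)
    also have "\<dots> = col (A * \<Phi>) b"
      using that col_Q by (simp add: col_mult2[OF A \<Phi>])
    also have "\<dots> = col (\<Phi> * B) b"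
      using intertwines by (simp add: \<Phi>_def)
    finally have "(Q' * A * Q) $$ (j, b) = (Q' * (\<Phi> * B)) $$ (j, b)"
      using that \<open>k \<le> n\<close> A Q Q' B \<Phi> by simp
    also have "Q' * (\<Phi> * B) = (Q' * \<Phi>) * B"
      using Q' B \<Phi> by simp
    also have "((Q' * \<Phi>) * B) $$ (j, b) = (\<Sum>l<k. (Q' * \<Phi>) $$ (j, l) * B $$ (l, b))"
      using that Q' B \<Phi> by (simp del: assoc_mult_mat add: scalar_prod_def atLeast0LessThan)
    also have "\<dots> = (\<Sum>l<k. 1\<^sub>m n $$ (j, l) * B $$ (l, b))"
      using that \<open>k \<le> n\<close> Q Q' \<Phi> col_Q by (auto simp flip: Q'Q intro!: sum.cong)
    also have "\<dots> = (if j < k then B $$ (j, b) else 0)"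
      using that \<open>k \<le> n\<close> by (simp add: if_distrib[of "\<lambda>c. c * _"] cong: if_cong)
    finally show ?thesis .
  qed
  ultimately show ?thesis
    using char_poly_dvd_if_leading_block[of "Q' * A * Q" n B k] A Q Q' B \<open>k \<le> n\<close> by simp
qed

definition mat_trace :: "'a :: comm_ring_1 mat \<Rightarrow> 'a" where
  "mat_trace A = (\<Sum>i<dim_row A. A $$ (i, i))"

lemma mat_trace_mult_comm:
  assumes X: "X \<in> carrier_mat n m" and Y: "Y \<in> carrier_mat m n"
  shows "mat_trace (X * Y) = mat_trace (Y * X)"
proof -
  have "mat_trace (X * Y) = (\<Sum>i<n. \<Sum>j<m. X $$ (i, j) * Y $$ (j, i))"
    using X Y by (auto simp: mat_trace_def scalar_prod_def atLeast0LessThan intro!: sum.cong)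
  also have "\<dots> = (\<Sum>j<m. \<Sum>i<n. Y $$ (j, i) * X $$ (i, j))"
    by (subst sum.swap) (simp add: mult.commute)
  also have "\<dots> = mat_trace (Y * X)"
    using X Y by (auto simp: mat_trace_def scalar_prod_def atLeast0LessThan intro!: sum.cong)
  finally show ?thesis .
qed

lemma mat_trace_similar:
  assumes "similar_mat A B"
  shows "mat_trace A = mat_trace B"
proof -
  obtain n P Q where carrier: "A \<in> carrier_mat n n" "B \<in> carrier_mat n n"
      "P \<in> carrier_mat n n" "Q \<in> carrier_mat n n"
    and QP: "Q * P = 1\<^sub>m n" and AB: "A = P * B * Q"
    using similar_matD[OF assms] by blast
  have "mat_trace A = mat_trace ((P * B) * Q)"
    using AB by simp
  also have "\<dots> = mat_trace (Q * (P * B))"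
    by (rule mat_trace_mult_comm[of _ n n]) (use carrier in auto)
  also have "Q * (P * B) = (Q * P) * B"
    using carrier by (intro assoc_mult_mat[symmetric, of _ n n]) auto
  also have "\<dots> = B"
    using carrier QP by simp
  finally show ?thesis .
qed

lemma mat_trace_eq_0_if_char_poly_monom:
  fixes A :: "complex mat"
  assumes A: "A \<in> carrier_mat n n" and char_poly: "char_poly A = monom 1 n"
  shows "mat_trace A = 0"
proof -
  \<comment> \<open>Schur: \<open>A\<close> is similar to an upper triangular matrix whose diagonal lists the roots of
    its characteristic polynomial, here all zero.\<close>
  have linear: "char_poly A = (\<Prod>e\<leftarrow>replicate n 0. [:- e, 1:])"
    unfolding char_poly by (simp add: monom_altdef)
  obtain B P Q where schur: "schur_decomposition A (replicate n 0) = (B, P, Q)"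
    by (cases "schur_decomposition A (replicate n 0)") auto
  have wit: "similar_mat_wit A B P Q" and diag: "diag_mat B = replicate n 0"
    using schur_decomposition[OF A linear schur] by auto
  have B: "B \<in> carrier_mat n n"
    using similar_mat_witD2(5)[OF A wit] .
  have "mat_trace A = mat_trace B"
    using wit by (intro mat_trace_similar) (auto simp only: similar_mat_def)
  also have "\<dots> = 0"
  proof -
    have "B $$ (i, i) = 0" if "i < n" for i
      using arg_cong[OF diag, of "\<lambda>xs. xs ! i"] that B by (simp add: diag_mat_def)
    then show ?thesis
      using B by (simp add: mat_trace_def)
  qed
  finally show ?thesis .
qed

lemma char_poly_neq_monom_if_mat_trace_nonzero:
  fixes A :: "int mat"
  assumes A: "A \<in> carrier_mat n n" and trace: "mat_trace A \<noteq> 0"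
  shows "char_poly A \<noteq> monom 1 i"
proof
  assume char_poly: "char_poly A = monom 1 i"
  then have "i = n"
    using degree_monic_char_poly[OF A] by (simp add: degree_monom_eq)
  define Ac where "Ac = map_mat (of_int :: int \<Rightarrow> complex) A"
  have "char_poly Ac = map_poly of_int (char_poly A)"
    unfolding Ac_def by (rule of_int_hom.char_poly_hom[OF A])
  then have "char_poly Ac = monom 1 n"
    using char_poly \<open>i = n\<close> by (simp add: map_poly_monom)
  then have "mat_trace Ac = 0"
    using A by (intro mat_trace_eq_0_if_char_poly_monom) (auto simp: Ac_def)
  moreover have "mat_trace Ac = of_int (mat_trace A)"
    using A by (simp add: Ac_def mat_trace_def)
  ultimately show False
    using trace by simp
qed

section \<open>Monic divisors of \<open>X\<^sup>m P\<close>\<close>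

lemma monic_dvd_X_power:
  fixes h :: "int poly"
  assumes "h dvd monom 1 m" and "lead_coeff h = 1"
  shows "\<exists>i\<le>m. h = monom 1 i"
proof -
  have X: "prime ([:0, 1:] :: int poly)"
    by (simp add: prime_def prime_elem_linear_poly normalize_monic)
  have "h dvd [:0, 1:] ^ m"
    using assms(1) by (simp add: monom_altdef)
  then obtain i where "i \<le> m" "normalize h = normalize ([:0, 1:] ^ i)"
    using divides_primepow_weak[OF X] by metis
  then show ?thesis
    using assms(2) by (auto simp: normalize_monic lead_coeff_power monom_altdef)
qed

lemma monic_dvd_X_power_mult_irreducible:
  fixes c P :: "int poly"
  assumes dvd: "c dvd monom 1 m * P" and c: "lead_coeff c = 1"
    and P: "lead_coeff P = 1" "irreducible P"
    and not_X_power: "\<And>i. c \<noteq> monom 1 i"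
  shows "\<exists>l\<le>m. c = monom 1 l * P"
proof (cases "P dvd c")
  case True
  then obtain h where h: "c = P * h" by blast
  have "h dvd monom 1 m"
    using dvd P unfolding h by (auto simp: mult.commute)
  moreover have "lead_coeff h = 1"
    using c P h by (simp add: lead_coeff_mult)
  ultimately show ?thesis
    using h monic_dvd_X_power by (auto simp: mult.commute)
next
  case False
  then have "coprime P c"
    by (intro prime_elem_imp_coprime irreducible_imp_prime_elem P)
  then have "c dvd monom 1 m"
    using dvd by (metis coprime_commute coprime_dvd_mult_left_iff)
  then show ?thesis
    using monic_dvd_X_power c not_X_power by blast
qed

section \<open>Length-2 factors of the fixed point\<close>

lemma subst_word_Nil [simp]: "subst_word \<tau> [] = []"
  and subst_word_Cons [simp]: "subst_word \<tau> (b # w) = \<tau> b @ subst_word \<tau> w"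
  and subst_word_append [simp]: "subst_word \<tau> (u @ v) = subst_word \<tau> u @ subst_word \<tau> v"
  by (simp_all add: subst_word_def)

lemma take_2_drop: "Suc j < length w \<Longrightarrow> take 2 (drop j w) = [w ! j, w ! Suc j]"
  by (simp add: Cons_nth_drop_Suc[symmetric] numeral_2_eq_2)

lemma count_list_map_eq_sum:
  assumes "finite S" and "set xs \<subseteq> S"
  shows "count_list (map f xs) b = (\<Sum>v\<in>{v \<in> S. f v = b}. count_list xs v)"
  using assms(2)
proof (induction xs)
  case (Cons y xs)
  have "(\<Sum>v\<in>{v \<in> S. f v = b}. count_list (y # xs) v)
        = (\<Sum>v\<in>{v \<in> S. f v = b}. count_list xs v + (if y = v then 1 else 0))"
    by (rule sum.cong) auto
  also have "\<dots> = (\<Sum>v\<in>{v \<in> S. f v = b}. count_list xs v)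
                  + (\<Sum>v\<in>{v \<in> S. f v = b}. if y = v then 1 else 0)"
    by (rule sum.distrib)
  also have "(\<Sum>v\<in>{v \<in> S. f v = b}. if y = v then 1 else 0) = (if f y = b then 1 else 0)"
    using Cons.prems assms(1) by simp
  finally show ?case
    using Cons by simp
qed simp

lemma bij_betw_rank:
  fixes g :: "'a \<Rightarrow> nat"
  assumes "finite S" and "inj_on g S"
  shows "bij_betw (\<lambda>w. card {v \<in> S. g v < g w}) S {0..<card S}"
proof -
  let ?rank = "\<lambda>w. card {v \<in> S. g v < g w}"
  have mono: "?rank v < ?rank w" if "v \<in> S" "w \<in> S" "g v < g w" for v w
    by (rule psubset_card_mono) (use assms(1) that in auto)
  have "inj_on ?rank S"
  proof (rule inj_onI)
    fix v w assume "v \<in> S" "w \<in> S" "?rank v = ?rank w"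
    then have "g v = g w"
      using mono[of v w] mono[of w v] by (metis less_irrefl nat_neq_iff)
    then show "v = w"
      using assms(2) \<open>v \<in> S\<close> \<open>w \<in> S\<close> by (auto dest: inj_onD)
  qed
  moreover have "?rank w < card S" if "w \<in> S" for w
    by (rule psubset_card_mono) (use assms(1) that in auto)
  then have "?rank ` S \<subseteq> {0..<card S}" by auto
  ultimately show ?thesis
    by (simp add: bij_betw_def card_image card_subset_eq)
qed

lemma bij_betw_Theta2:
  assumes "finite (factors2 x)"
  shows "bij_betw (Theta2 x) (factors2 x) {0..<card (factors2 x)}"
proof -
  have occurs: "[x (first_occ x w), x (Suc (first_occ x w))] = w" if w: "w \<in> factors2 x" for w
  proof -
    obtain i where "[x i, x (Suc i)] = w"
      using w unfolding factors2_def by blast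
    then show ?thesis
      unfolding first_occ_def by (rule LeastI)
  qed
  then have "inj_on (first_occ x) (factors2 x)"
    by (metis inj_onI)
  from bij_betw_rank[OF assms this] show ?thesis
    unfolding Theta2_def[abs_def] .
qed

locale prolongable_substitution =
  fixes d :: nat and \<tau> :: "nat \<Rightarrow> nat list" and a :: nat
  assumes substitution: "is_substitution d \<tau>" and prolongable: "prolongable d \<tau> a"
begin

abbreviation x :: "nat \<Rightarrow> nat" where
  "x \<equiv> fixpoint_word \<tau> a"

definition iterate :: "nat \<Rightarrow> nat list" where
  "iterate k = (subst_word \<tau> ^^ k) [a]"

lemma a_less: "a < d"
  using prolongable by (simp add: prolongable_def)

lemma image_nonempty: "b < d \<Longrightarrow> \<tau> b \<noteq> []"
  and image_letters: "b < d \<Longrightarrow> set (\<tau> b) \<subseteq> {0..<d}"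
  using substitution by (auto simp: is_substitution_def)

lemma set_subst_word: "set w \<subseteq> {0..<d} \<Longrightarrow> set (subst_word \<tau> w) \<subseteq> {0..<d}"
  by (induction w) (use image_letters in auto)

lemma length_subst_word_ge: "set w \<subseteq> {0..<d} \<Longrightarrow> length w \<le> length (subst_word \<tau> w)"
proof (induction w)
  case (Cons b w)
  then have "\<tau> b \<noteq> []" using image_nonempty by simp
  with Cons show ?case by (cases "\<tau> b") auto
qed simp

lemma iterate_0: "iterate 0 = [a]"
  and iterate_Suc: "iterate (Suc k) = subst_word \<tau> (iterate k)"
  by (simp_all add: iterate_def)

lemma set_iterate: "set (iterate k) \<subseteq> {0..<d}"
  by (induction k) (use a_less set_subst_word in \<open>auto simp: iterate_0 iterate_Suc\<close>)

lemma iterate_Suc_extends: "\<exists>s. iterate (Suc k) = iterate k @ s"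
proof (induction k)
  case 0
  then show ?case
    using prolongable by (auto simp: prolongable_def iterate_0 iterate_Suc)
next
  case (Suc k)
  then show ?case
    by (auto simp: iterate_Suc[of "Suc k"] iterate_Suc[of k])
qed

lemma iterate_extends: "k \<le> k' \<Longrightarrow> \<exists>s. iterate k' = iterate k @ s"
proof (induction k' rule: dec_induct)
  case (step k')
  then show ?case
    using iterate_Suc_extends[of k'] by auto
qed simp

lemma length_iterate: "k < length (iterate k)"
proof (induction k)
  case (Suc k)
  obtain u where u: "u \<noteq> []" "\<tau> a = a # u"
    using prolongable by (auto simp: prolongable_def)
  obtain v where v: "iterate k = a # v"
    using iterate_extends[of 0 k] by (auto simp: iterate_0)
  have "length v \<le> length (subst_word \<tau> v)"
    using set_iterate[of k] v by (intro length_subst_word_ge) auto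
  then have "length (iterate k) < length (iterate (Suc k))"
    using u v by (cases u) (auto simp: iterate_Suc)
  with Suc show ?case by simp
qed (simp add: iterate_0)

lemma fixpoint_word_eq_iterate_nth:
  assumes "n < length (iterate k)"
  shows "x n = iterate k ! n"
proof -
  let ?k = "LEAST k. n < length (iterate k)"
  have "n < length (iterate ?k)" and "?k \<le> k"
    using assms by (auto intro: LeastI Least_le)
  moreover obtain s where "iterate k = iterate ?k @ s"
    using iterate_extends[OF \<open>?k \<le> k\<close>] by blast
  ultimately show ?thesis
    by (simp add: fixpoint_word_def iterate_def[symmetric] nth_append)
qed

lemma fixpoint_word_less: "x n < d"
  using fixpoint_word_eq_iterate_nth[OF length_iterate] nth_mem[OF length_iterate] set_iterate
  by fastforce

lemma subst_word_prefix_nth: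
  assumes "j < length (subst_word \<tau> (map x [0..<n]))"
  shows "subst_word \<tau> (map x [0..<n]) ! j = x j"
proof -
  have "map x [0..<n] = take n (iterate n)"
    using length_iterate[of n] by (intro nth_equalityI) (auto simp: fixpoint_word_eq_iterate_nth)
  then have "iterate (Suc n) = subst_word \<tau> (map x [0..<n]) @ subst_word \<tau> (drop n (iterate n))"
    by (metis append_take_drop_id iterate_Suc subst_word_append)
  then show ?thesis
    using assms fixpoint_word_eq_iterate_nth[of j "Suc n"] by (simp add: nth_append)
qed

lemma factor_of_image_in_factors2:
  assumes "Suc j < length (subst_word \<tau> [x i, x (Suc i)])"
  shows "take 2 (drop j (subst_word \<tau> [x i, x (Suc i)])) \<in> factors2 x"
proof -
  define w where "w = subst_word \<tau> [x i, x (Suc i)]"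
  define s where "s = length (subst_word \<tau> (map x [0..<i]))"
  have prefix: "subst_word \<tau> (map x [0..<Suc (Suc i)]) = subst_word \<tau> (map x [0..<i]) @ w"
    by (simp add: w_def)
  have w_nth: "w ! t = x (s + t)" if "t < length w" for t
  proof -
    have "subst_word \<tau> (map x [0..<Suc (Suc i)]) ! (s + t) = w ! t"
      unfolding prefix s_def by (simp add: nth_append)
    moreover have "s + t < length (subst_word \<tau> (map x [0..<Suc (Suc i)]))"
      unfolding prefix s_def using that by simp
    ultimately show ?thesis
      using subst_word_prefix_nth by metis
  qed
  have "take 2 (drop j w) = [x (s + j), x (Suc (s + j))]"
    using assms w_nth take_2_drop[of j w] by (simp add: w_def)
  then show ?thesis
    unfolding w_def by (auto simp: factors2_def)
qed

lemma finite_factors2: "finite (factors2 x)"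
proof (rule finite_subset)
  show "factors2 x \<subseteq> (\<lambda>(b, c). [b, c]) ` ({0..<d} \<times> {0..<d})"
    using fixpoint_word_less by (auto simp: factors2_def)
qed simp

abbreviation p :: nat where
  "p \<equiv> card (factors2 x)"

definition factor :: "nat \<Rightarrow> nat list" where
  "factor = the_inv_into (factors2 x) (Theta2 x)"

definition first_letter :: "nat \<Rightarrow> nat" where
  "first_letter l = factor l ! 0"

lemma factor_in_factors2: "l < p \<Longrightarrow> factor l \<in> factors2 x"
  using bij_betw_Theta2[OF finite_factors2]
  by (auto simp: factor_def bij_betw_def the_inv_into_into)

lemma factor_Theta2: "w \<in> factors2 x \<Longrightarrow> factor (Theta2 x w) = w"
  and Theta2_less: "w \<in> factors2 x \<Longrightarrow> Theta2 x w < p"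
  using bij_betw_Theta2[OF finite_factors2]
  by (auto simp: factor_def bij_betw_def the_inv_into_f_f)

lemma tau2_eq:
  "tau2 \<tau> a l = map (\<lambda>j. Theta2 x (take 2 (drop j (subst_word \<tau> (factor l)))))
                    [0..<length (\<tau> (first_letter l))]"
  by (simp add: tau2_def Let_def factor_def first_letter_def the_inv_into_def)

lemma
  assumes "l < p"
  shows tau2_letters: "set (tau2 \<tau> a l) \<subseteq> {0..<p}"
    and map_first_letter_tau2: "map first_letter (tau2 \<tau> a l) = \<tau> (first_letter l)"
proof -
  obtain i where factor: "factor l = [x i, x (Suc i)]"
    using factor_in_factors2[OF assms] by (auto simp: factors2_def)
  let ?w = "\<lambda>j. take 2 (drop j (subst_word \<tau> (factor l)))"
  have "\<tau> (x (Suc i)) \<noteq> []"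
    using image_nonempty fixpoint_word_less by blast
  then have w: "?w j \<in> factors2 x" "?w j ! 0 = \<tau> (x i) ! j" if "j < length (\<tau> (x i))" for j
    using that factor_of_image_in_factors2[of j i] unfolding factor
    by (auto simp: take_2_drop nth_append neq_Nil_conv)
  show "set (tau2 \<tau> a l) \<subseteq> {0..<p}"
    using w(1) by (auto simp: tau2_eq first_letter_def factor Theta2_less)
  show "map first_letter (tau2 \<tau> a l) = \<tau> (first_letter l)"
    using w by (auto simp: tau2_eq first_letter_def factor factor_Theta2 intro: nth_equalityI)
qed

lemma first_letter_less:
  assumes "l < p"
  shows "first_letter l < d"
proof -
  obtain i where "factor l = [x i, x (Suc i)]"
    using factor_in_factors2[OF assms] by (auto simp: factors2_def)
  then show ?thesis
    using fixpoint_word_less by (simp add: first_letter_def)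
qed

lemma first_letter_onto:
  assumes "\<forall>b<d. \<exists>i. x i = b"
  shows "first_letter ` {0..<p} = {0..<d}"
proof (intro subset_antisym subsetI)
  fix b assume "b \<in> {0..<d}"
  then obtain i where "x i = b"
    using assms by auto
  moreover have "[x i, x (Suc i)] \<in> factors2 x"
    by (auto simp: factors2_def)
  ultimately have "first_letter (Theta2 x [x i, x (Suc i)]) = b"
    and "Theta2 x [x i, x (Suc i)] < p"
    by (simp_all add: first_letter_def factor_Theta2 Theta2_less)
  then show "b \<in> first_letter ` {0..<p}"
    by force
qed (auto simp: first_letter_less)

lemma incidence_matrix_tau2_intertwines:
  "incidence_matrix p (tau2 \<tau> a) * fun_mat p d first_letter
     = fun_mat p d first_letter * incidence_matrix d \<tau>"
proof (rule eq_matI)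
  fix l b assume "l < dim_row (fun_mat p d first_letter * incidence_matrix d \<tau> :: int mat)"
    and "b < dim_col (fun_mat p d first_letter * incidence_matrix d \<tau> :: int mat)"
  then have l: "l < p" and b: "b < d"
    by (simp_all add: incidence_matrix_def)
  have "(incidence_matrix p (tau2 \<tau> a) * fun_mat p d first_letter) $$ (l, b)
        = (\<Sum>v\<in>{v. v < p \<and> first_letter v = b}. incidence_matrix p (tau2 \<tau> a) $$ (l, v))"
    using l b mult_fun_mat_index[of "incidence_matrix p (tau2 \<tau> a)" p p l b d first_letter]
    by (simp add: incidence_matrix_def)
  also have "\<dots> = (\<Sum>v\<in>{v. v < p \<and> first_letter v = b}. int (count_list (tau2 \<tau> a l) v))"
    using l by (intro sum.cong) (auto simp: incidence_matrix_def)
  also have "\<dots> = int (count_list (map first_letter (tau2 \<tau> a l)) b)"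
    using count_list_map_eq_sum[OF _ tau2_letters[OF l], of first_letter b]
    by (simp add: atLeast0LessThan lessThan_def)
  also have "\<dots> = (fun_mat p d first_letter * incidence_matrix d \<tau>) $$ (l, b)"
    using l b first_letter_less[OF l]
      fun_mat_mult_index[of "incidence_matrix d \<tau>" d d l p b first_letter]
    by (simp add: map_first_letter_tau2 incidence_matrix_def)
  finally show "(incidence_matrix p (tau2 \<tau> a) * fun_mat p d first_letter) $$ (l, b)
        = (fun_mat p d first_letter * incidence_matrix d \<tau>) $$ (l, b)" .
qed (simp_all add: incidence_matrix_def)

lemma mat_trace_incidence_matrix_pos: "0 < mat_trace (incidence_matrix d \<tau>)"
proof -
  have "0 < incidence_matrix d \<tau> $$ (a, a)"
    using prolongable a_less by (auto simp: prolongable_def incidence_matrix_def)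
  also have "\<dots> \<le> mat_trace (incidence_matrix d \<tau>)"
    using a_less by (auto simp: mat_trace_def incidence_matrix_def intro: member_le_sum)
  finally show ?thesis .
qed

end

theorem proposition38:
  fixes d :: nat and \<tau> :: "nat \<Rightarrow> nat list" and a :: nat
    and \<theta> :: real and P :: "int poly" and m :: nat
  assumes "is_substitution d \<tau>"
    and "prolongable d \<tau> a"
    and "\<forall>b<d. \<exists>i. fixpoint_word \<tau> a i = b"
    and "pisot_minpoly \<theta> P"
    and "char_poly (incidence_matrix (card (factors2 (fixpoint_word \<tau> a))) (tau2 \<tau> a))
           = monom 1 m * P"
  shows "\<exists>l\<le>m. char_poly (incidence_matrix d \<tau>) = monom 1 l * P"
proof -
  interpret prolongable_substitution d \<tau> a
    using assms(1,2) by unfold_locales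
  let ?M = "incidence_matrix d \<tau>"
  have M: "?M \<in> carrier_mat d d"
    by (simp add: incidence_matrix_def)
  have "char_poly ?M dvd char_poly (incidence_matrix p (tau2 \<tau> a))"
    using first_letter_onto[OF assms(3)] incidence_matrix_tau2_intertwines
    by (intro char_poly_dvd_if_fun_mat_intertwines[OF _ M]) (simp_all add: incidence_matrix_def)
  then have "char_poly ?M dvd monom 1 m * P"
    using assms(5) by simp
  moreover have "lead_coeff (char_poly ?M) = 1"
    using degree_monic_char_poly[OF M] by simp
  moreover have "char_poly ?M \<noteq> monom 1 i" for i
    using mat_trace_incidence_matrix_pos by (intro char_poly_neq_monom_if_mat_trace_nonzero[OF M]) simp
  ultimately show ?thesis
    using assms(4) by (intro monic_dvd_X_power_mult_irreducible) (auto simp: pisot_minpoly_def)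
qed

end
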